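(* Let $a$ be a primitive element of $GF(2^m)$, $n\le 2^m-1$, $1\le k\le d\le n-1$, $g(x)=\prod_{j=1}^{n-k}(x-a^j)=\sum_{i=0}^{n-k}g_ix^i$ and $f(x)=\prod_{j=1}^{n-d}(x-a^j)=\sum_{i=0}^{n-d}f_ix^i$. Let $G_k$ be the $k\times n$ matrix whose $r$-th row ($r=1,\dots,k$) is $(0,\dots,0,g_0,\dots,g_{n-k},0,\dots,0)$ with $r-1$ leading zeros, $B$ the $(d-k)\times n$ matrix whose $r$-th row ($r=1,\dots,d-k$) is $(0,\dots,0,f_0,\dots,f_{n-d},0,\dots,0)$ with $r-1$ leading zeros, and $G=\begin{bmatrix}G_k\\ B\end{bmatrix}$. Then $G$ is a least-update-complexity matrix.
   Context: The update complexity of a matrix is the maximum, over its rows, of the number of nonzero entries in the row. Here "least-update-complexity" refers to matrices of the form $\begin{bmatrix}G_k'\\ B'\end{bmatrix}$ that are generator matrices of the $[n,d]$ Reed–Solomon code generated by $f(x)$ and whose first $k$ rows $G_k'$ form a generator matrix of the $[n,k]$ Reed–Solomon code generated by $g(x)$ (the form required for the minimum-bandwidth regenerating code); $G$ has the minimum update complexity among all such matrices. A Reed–Solomon code generated by $h(x)$ is the set of vectors in $GF(2^m)^n$ whose polynomial $\sum_i c_ix^i$ is divisible by $h(x)$. *)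

theory Defs
  imports "HOL-Computational_Algebra.Polynomial"
begin

text \<open>Vectors of length n are functions nat => 'a vanishing at indices >= n.
  A t x n matrix is a function M :: nat => nat => 'a, only entries r < t, j < n matter.\<close>

definition primitive_element :: "'a::field \<Rightarrow> bool" where
  "primitive_element a \<longleftrightarrow> (\<forall>x. x \<noteq> 0 \<longrightarrow> (\<exists>i::nat. x = a ^ i))"

definition rs_gen_poly :: "'a::field \<Rightarrow> nat \<Rightarrow> 'a poly" where
  "rs_gen_poly a t = (\<Prod>j\<in>{1..t}. [:- (a ^ j), 1:])"

definition rs_code :: "nat \<Rightarrow> 'a::field poly \<Rightarrow> (nat \<Rightarrow> 'a) set" where
  "rs_code n h = {c. (\<forall>j\<ge>n. c j = 0) \<and> h dvd (\<Sum>i<n. monom (c i) i)}"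

definition row_space :: "nat \<Rightarrow> nat \<Rightarrow> (nat \<Rightarrow> nat \<Rightarrow> 'a::field) \<Rightarrow> (nat \<Rightarrow> 'a) set" where
  "row_space t n M = {c. (\<forall>j\<ge>n. c j = 0) \<and>
     (\<exists>lam::nat \<Rightarrow> 'a. \<forall>j<n. c j = (\<Sum>r<t. lam r * M r j))}"

definition rows_lin_indep :: "nat \<Rightarrow> nat \<Rightarrow> (nat \<Rightarrow> nat \<Rightarrow> 'a::field) \<Rightarrow> bool" where
  "rows_lin_indep t n M \<longleftrightarrow>
     (\<forall>lam::nat \<Rightarrow> 'a. (\<forall>j<n. (\<Sum>r<t. lam r * M r j) = 0) \<longrightarrow> (\<forall>r<t. lam r = 0))"

definition is_generator_matrix ::
  "nat \<Rightarrow> nat \<Rightarrow> (nat \<Rightarrow> nat \<Rightarrow> 'a::field) \<Rightarrow> (nat \<Rightarrow> 'a) set \<Rightarrow> bool" where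
  "is_generator_matrix t n M C \<longleftrightarrow> rows_lin_indep t n M \<and> row_space t n M = C"

definition row_weight :: "nat \<Rightarrow> (nat \<Rightarrow> nat \<Rightarrow> 'a::zero) \<Rightarrow> nat \<Rightarrow> nat" where
  "row_weight n M r = card {j. j < n \<and> M r j \<noteq> 0}"

definition update_complexity :: "nat \<Rightarrow> nat \<Rightarrow> (nat \<Rightarrow> nat \<Rightarrow> 'a::zero) \<Rightarrow> nat" where
  "update_complexity t n M = Max (row_weight n M ` {..<t})"

definition mbr_admissible ::
  "nat \<Rightarrow> nat \<Rightarrow> nat \<Rightarrow> 'a::field poly \<Rightarrow> 'a poly \<Rightarrow> (nat \<Rightarrow> nat \<Rightarrow> 'a) \<Rightarrow> bool" where
  "mbr_admissible n k d g f M \<longleftrightarrow>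
     is_generator_matrix d n M (rs_code n f) \<and> is_generator_matrix k n M (rs_code n g)"

definition least_update_complexity ::
  "nat \<Rightarrow> nat \<Rightarrow> nat \<Rightarrow> 'a::field poly \<Rightarrow> 'a poly \<Rightarrow> (nat \<Rightarrow> nat \<Rightarrow> 'a) \<Rightarrow> bool" where
  "least_update_complexity n k d g f M \<longleftrightarrow>
     mbr_admissible n k d g f M \<and>
     (\<forall>M'. mbr_admissible n k d g f M' \<longrightarrow> update_complexity d n M \<le> update_complexity d n M')"

definition shift_row :: "'a::zero poly \<Rightarrow> nat \<Rightarrow> nat \<Rightarrow> 'a" where
  "shift_row p r j = (if r \<le> j then coeff p (j - r) else 0)"

text \<open>G = [G_k; B] with rows indexed from 0.\<close>
definition G_matrix :: "nat \<Rightarrow> 'a::zero poly \<Rightarrow> 'a poly \<Rightarrow> nat \<Rightarrow> nat \<Rightarrow> 'a" where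
  "G_matrix k g f r j = (if r < k then shift_row g r j else shift_row f (r - k) j)"

end

(*
  Lower bound: every admissible matrix has a row among its first k rows that is a nonzero
  codeword of the Reed--Solomon code generated by g, whose roots are the n - k consecutive
  powers a, ..., a^(n-k) of an element of order at least n; by the BCH bound such a codeword
  has at least n - k + 1 nonzero entries.

  Upper bound: G is admissible, because a row combination of G with coefficients lam is the
  polynomial u g + v f with deg u < k and deg v < d - k, and writing g = f h, division with
  remainder by h shows that these polynomials are exactly the multiples of f of degree < n, each
  obtained once. Every row of G is a shifted copy of the coefficients of g or of f, so it has
  at most deg g + 1 = n - k + 1 nonzero entries.
*)

theory Submission
  imports Defs
begin

definition poly_of_vec :: "nat \<Rightarrow> (nat \<Rightarrow> 'a::comm_monoid_add) \<Rightarrow> 'a poly" where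
  "poly_of_vec n c = (\<Sum>i<n. monom (c i) i)"

lemma coeff_poly_of_vec: "coeff (poly_of_vec n c) j = (if j < n then c j else 0)"
  by (simp add: poly_of_vec_def coeff_sum coeff_monom)

lemma poly_of_vec_coeff:
  assumes "\<forall>j\<ge>n. coeff p j = 0"
  shows "poly_of_vec n (coeff p) = p"
  using assms by (intro poly_eqI) (simp add: coeff_poly_of_vec)

lemma poly_of_vec_eq_iff:
  assumes "\<forall>j\<ge>n. coeff p j = 0"
  shows "poly_of_vec n c = p \<longleftrightarrow> (\<forall>j<n. c j = coeff p j)"
  using assms by (auto simp: poly_eq_iff coeff_poly_of_vec)

lemma degree_less_if_coeff_vanishing:
  assumes "p \<noteq> 0" and "\<forall>i\<ge>n. coeff p i = 0"
  shows "degree p < n"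
  using assms leading_coeff_neq_0 not_less by blast

lemma degree_poly_of_vec_less: "poly_of_vec n c \<noteq> 0 \<Longrightarrow> degree (poly_of_vec n c) < n"
  by (simp add: degree_less_if_coeff_vanishing coeff_poly_of_vec)

lemma poly_poly_of_vec:
  fixes c :: "nat \<Rightarrow> 'a::comm_semiring_1"
  shows "poly (poly_of_vec n c) x = (\<Sum>i<n. c i * x ^ i)"
  by (simp add: poly_of_vec_def poly_sum poly_monom)

lemma rs_code_iff: "c \<in> rs_code n h \<longleftrightarrow> (\<forall>j\<ge>n. c j = 0) \<and> h dvd poly_of_vec n c"
  by (simp add: rs_code_def poly_of_vec_def)

lemma coeff_mult_eq_0_of_vanishing:
  fixes p q :: "'a::comm_semiring_0 poly"
  assumes "\<forall>i\<ge>a. coeff p i = 0" and "a + degree q \<le> j"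
  shows "coeff (p * q) j = 0"
  unfolding coeff_mult
proof (rule sum.neutral, intro ballI)
  fix i assume "i \<in> {..j}"
  show "coeff p i * coeff q (j - i) = 0"
  proof (cases "a \<le> i")
    case False
    with assms(2) have "degree q < j - i" by linarith
    thus ?thesis by (simp add: coeff_eq_0)
  qed (use assms(1) in simp)
qed

lemma rs_gen_poly_nonzero: "rs_gen_poly a t \<noteq> (0::'a::field poly)"
  by (simp add: rs_gen_poly_def prod_zero_iff)

lemma degree_rs_gen_poly: "degree (rs_gen_poly (a::'a::field) t) = t"
  by (simp add: rs_gen_poly_def degree_prod_sum_eq)

lemma poly_rs_gen_poly_power:
  assumes "1 \<le> j" "j \<le> t"
  shows "poly (rs_gen_poly (a::'a::field) t) (a ^ j) = 0"
  using assms by (auto simp: rs_gen_poly_def poly_prod prod_zero_iff)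

lemma rs_gen_poly_dvd: "s \<le> t \<Longrightarrow> rs_gen_poly (a::'a::field) s dvd rs_gen_poly a t"
  unfolding rs_gen_poly_def by (intro prod_dvd_prod_subset) auto

subsection \<open>The BCH bound\<close>

lemma rs_code_poly_power_eq_0:
  assumes "c \<in> rs_code n (rs_gen_poly (a::'a::field) t)" "1 \<le> s" "s \<le> t"
  shows "poly (poly_of_vec n c) (a ^ s) = 0"
proof -
  have "rs_gen_poly a t dvd poly_of_vec n c" using assms(1) by (simp add: rs_code_iff)
  then obtain w where "poly_of_vec n c = rs_gen_poly a t * w" by (elim dvdE)
  with assms(2,3) show ?thesis by (simp add: poly_rs_gen_poly_power)
qed

lemma rs_code_sum_poly_eq_0:
  fixes a :: "'a::field"
  assumes c: "c \<in> rs_code n (rs_gen_poly a t)" and "coeff Q 0 = 0" "degree Q \<le> t"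
  shows "(\<Sum>i<n. c i * poly Q (a ^ i)) = 0"
proof -
  have poly_Q: "poly Q x = (\<Sum>s\<le>t. coeff Q s * x ^ s)" for x
    unfolding poly_altdef
    by (rule sum.mono_neutral_left) (use \<open>degree Q \<le> t\<close> in \<open>auto intro: coeff_eq_0\<close>)
  have "(\<Sum>i<n. c i * poly Q (a ^ i)) = (\<Sum>i<n. \<Sum>s\<le>t. coeff Q s * (c i * (a ^ s) ^ i))"
    by (simp add: poly_Q sum_distrib_left power_mult[symmetric] mult.commute mult.left_commute)
  also have "\<dots> = (\<Sum>s\<le>t. coeff Q s * poly (poly_of_vec n c) (a ^ s))"
    by (subst sum.swap) (simp add: poly_poly_of_vec sum_distrib_left)
  also have "\<dots> = 0"
  proof (rule sum.neutral, intro ballI)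
    fix s assume "s \<in> {..t}"
    thus "coeff Q s * poly (poly_of_vec n c) (a ^ s) = 0"
      using assms(2) rs_code_poly_power_eq_0[OF c, of s] by (cases "s = 0") auto
  qed
  finally show ?thesis .
qed

text \<open>The test polynomial Q = x * prod (x - a^i) over the other support positions satisfies
  the hypotheses of the previous lemma as long as the support has at most t elements,
  and it kills every term of the sum except the one at j0.\<close>

lemma rs_code_weight_ge:
  fixes a :: "'a::field"
  assumes "a \<noteq> 0" and inj: "inj_on (\<lambda>i. a ^ i) {..<n}"
    and c: "c \<in> rs_code n (rs_gen_poly a t)" and j0: "j0 < n" "c j0 \<noteq> 0"
  shows "t + 1 \<le> card {j. j < n \<and> c j \<noteq> 0}"
proof (rule ccontr)
  define S where "S = {j. j < n \<and> c j \<noteq> 0}"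
  assume "\<not> t + 1 \<le> card {j. j < n \<and> c j \<noteq> 0}"
  hence "card S \<le> t" by (simp add: S_def)
  have "finite S" "j0 \<in> S" using j0 by (auto simp: S_def)
  define Q where "Q = [:0, 1:] * (\<Prod>i\<in>S - {j0}. [:- (a ^ i), 1:])"
  have "card S > 0" using \<open>finite S\<close> \<open>j0 \<in> S\<close> by (auto simp: card_gt_0_iff)
  hence "degree Q = card S"
    using \<open>finite S\<close> \<open>j0 \<in> S\<close>
    by (simp add: Q_def degree_mult_eq prod_zero_iff degree_prod_sum_eq card_Diff_singleton)
  hence "(\<Sum>i<n. c i * poly Q (a ^ i)) = 0"
    using \<open>card S \<le> t\<close> by (intro rs_code_sum_poly_eq_0[OF c]) (simp_all add: Q_def)
  moreover have "c i * poly Q (a ^ i) = 0" if "i < n" "i \<noteq> j0" for i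
    using that \<open>finite S\<close> by (cases "c i = 0") (auto simp: Q_def S_def poly_prod prod_zero_iff)
  ultimately have "c j0 * poly Q (a ^ j0) = 0"
    using j0(1) by (simp add: sum.remove[of "{..<n}" j0] sum.neutral)
  moreover have "a ^ j0 \<noteq> a ^ i" if "i \<in> S - {j0}" for i
    using that j0(1) inj by (auto simp: S_def inj_on_def)
  ultimately show False
    using \<open>a \<noteq> 0\<close> \<open>finite S\<close> j0(2) by (simp add: Q_def poly_prod prod_zero_iff)
qed

lemma primitive_element_nonzero:
  fixes a :: "'a::{field,finite}"
  assumes "primitive_element a" and "2 < card (UNIV :: 'a set)"
  shows "a \<noteq> 0"
proof
  assume "a = 0"
  with assms(1) have "UNIV \<subseteq> {0, 1::'a}"
    by (auto simp: primitive_element_def)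
  hence "card (UNIV :: 'a set) \<le> card {0, 1::'a}" by (intro card_mono) auto
  with assms(2) show False by simp
qed

text \<open>If a^i = a^j with i < j, then every nonzero element is among a^0, ..., a^(j-i-1).\<close>

lemma inj_on_power_primitive_element:
  fixes a :: "'a::{field,finite}"
  assumes prim: "primitive_element a" and "a \<noteq> 0"
  shows "inj_on (\<lambda>i. a ^ i) {..<card (UNIV :: 'a set) - 1}"
proof -
  have "a ^ i \<noteq> a ^ j" if "i < j" "j < card (UNIV :: 'a set) - 1" for i j
  proof
    assume "a ^ i = a ^ j"
    define e where "e = j - i"
    have "a ^ j = a ^ i * a ^ e" using \<open>i < j\<close> by (simp add: e_def flip: power_add)
    with \<open>a ^ i = a ^ j\<close> \<open>a \<noteq> 0\<close> have "a ^ e = 1" by simp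
    have "UNIV - {0} \<subseteq> (\<lambda>l. a ^ l) ` {..<e}"
    proof
      fix x :: 'a assume "x \<in> UNIV - {0}"
      then obtain l where "x = a ^ l" using prim by (auto simp: primitive_element_def)
      also have "\<dots> = (a ^ e) ^ (l div e) * a ^ (l mod e)"
        by (simp flip: power_mult power_add)
      finally show "x \<in> (\<lambda>l. a ^ l) ` {..<e}"
        using \<open>a ^ e = 1\<close> \<open>i < j\<close> by (auto simp: e_def)
    qed
    hence "card (UNIV - {0::'a}) \<le> card ((\<lambda>l. a ^ l) ` {..<e})" by (intro card_mono) auto
    also have "\<dots> \<le> e" using card_image_le[of "{..<e}"] by simp
    finally have "card (UNIV - {0::'a}) \<le> e" .
    with that show False by (simp add: card_Diff_singleton e_def)
  qed
  thus ?thesis by (metis inj_onI linorder_neqE_nat lessThan_iff)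
qed

subsection \<open>The row space of G\<close>

lemma coeff_poly_of_vec_mult: "coeff (poly_of_vec n c * p) j = (\<Sum>r<n. c r * shift_row p r j)"
  unfolding poly_of_vec_def sum_distrib_right coeff_sum
  by (rule sum.cong) (auto simp: coeff_monom_mult shift_row_def)

definition G_combination ::
  "nat \<Rightarrow> nat \<Rightarrow> 'a::field poly \<Rightarrow> 'a poly \<Rightarrow> (nat \<Rightarrow> 'a) \<Rightarrow> 'a poly" where
  "G_combination k d g f lam = poly_of_vec k lam * g + poly_of_vec (d - k) (\<lambda>r. lam (k + r)) * f"

lemma G_matrix_row_combination:
  assumes "k \<le> d"
  shows "(\<Sum>r<d. lam r * G_matrix k g f r j) = coeff (G_combination k d g f lam) j"
proof -
  have "(\<Sum>r<d. lam r * G_matrix k g f r j) =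
        (\<Sum>r<k. lam r * G_matrix k g f r j) + (\<Sum>r\<in>{k..<d}. lam r * G_matrix k g f r j)"
    using assms by (simp add: sum.atLeastLessThan_concat flip: atLeast0LessThan)
  also have "(\<Sum>r\<in>{k..<d}. lam r * G_matrix k g f r j) =
             (\<Sum>r<d - k. lam (k + r) * G_matrix k g f (k + r) j)"
    using sum.shift_bounds_nat_ivl[of _ 0 k "d - k"] assms
    by (simp add: atLeast0LessThan add.commute)
  finally show ?thesis
    by (simp add: G_combination_def coeff_poly_of_vec_mult G_matrix_def)
qed

lemma coeff_G_combination_eq_0:
  assumes "k + degree g \<le> n" "d - k + degree f \<le> n" "n \<le> j"
  shows "coeff (G_combination k d g f lam) j = 0"
proof -
  have "coeff (poly_of_vec k lam * g) j = 0"
    using assms by (intro coeff_mult_eq_0_of_vanishing[where a = k]) (auto simp: coeff_poly_of_vec)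
  moreover have "coeff (poly_of_vec (d - k) (\<lambda>r. lam (k + r)) * f) j = 0"
    using assms by (intro coeff_mult_eq_0_of_vanishing[where a = "d - k"]) (auto simp: coeff_poly_of_vec)
  ultimately show ?thesis by (simp add: G_combination_def)
qed

lemma G_combination_eq_0D:
  fixes f h :: "'a::field poly"
  assumes "f \<noteq> 0" "h \<noteq> 0" "degree h = d - k"
    and "G_combination k d (f * h) f lam = 0" and "r < d"
  shows "lam r = 0"
proof -
  let ?U = "poly_of_vec k lam" and ?V = "poly_of_vec (d - k) (\<lambda>r. lam (k + r))"
  have "f * (?U * h + ?V) = 0"
    using assms(4) by (simp add: G_combination_def algebra_simps)
  hence UV: "?U * h + ?V = 0" using \<open>f \<noteq> 0\<close> by simp
  have "?V mod h = ?V"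
    using degree_poly_of_vec_less[of "d - k" "\<lambda>r. lam (k + r)"] assms(3)
    by (cases "?V = 0") (simp_all add: mod_poly_less)
  hence "?V = (?U * h + ?V) mod h" by simp
  hence "?V = 0" using UV by simp
  hence "?U = 0" using UV \<open>h \<noteq> 0\<close> by simp
  show ?thesis
  proof (cases "r < k")
    case True
    thus ?thesis using arg_cong[OF \<open>?U = 0\<close>, of "\<lambda>p. coeff p r"] by (simp add: coeff_poly_of_vec)
  next
    case False
    with \<open>r < d\<close> have "r - k < d - k" "k + (r - k) = r" by auto
    thus ?thesis using arg_cong[OF \<open>?V = 0\<close>, of "\<lambda>p. coeff p (r - k)"]
      by (simp add: coeff_poly_of_vec)
  qed
qed

text \<open>Division with remainder w = q h + r of the cofactor w = p / f yields the combination
  q (f h) + r f; the degree bound on p forces deg q < k.\<close>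

lemma dvd_iff_G_combination:
  fixes f h p :: "'a::field poly"
  assumes "f \<noteq> 0" "h \<noteq> 0" "degree f = n - d" "degree h = d - k" "k \<le> d" "d \<le> n"
    and p: "\<forall>j\<ge>n. coeff p j = 0"
  shows "f dvd p \<longleftrightarrow> (\<exists>lam. p = G_combination k d (f * h) f lam)"
proof
  assume "f dvd p"
  then obtain w where w: "p = f * w" by (elim dvdE)
  define q where "q = w div h"
  define r where "r = w mod h"
  have p_qr: "p = q * (f * h) + r * f"
    unfolding w q_def r_def by (metis div_mult_mod_eq distrib_left mult.commute mult.left_commute)
  have r_vanish: "\<forall>j\<ge>d - k. coeff r j = 0"
    using degree_mod_less[OF \<open>h \<noteq> 0\<close>, of w] assms(4) by (auto simp: r_def intro: coeff_eq_0)
  have q_vanish: "\<forall>j\<ge>k. coeff q j = 0"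
  proof (rule ccontr)
    assume "\<not> (\<forall>j\<ge>k. coeff q j = 0)"
    then obtain j where "k \<le> j" "coeff q j \<noteq> 0" by blast
    hence "q \<noteq> 0" and "k \<le> degree q" using le_degree by fastforce+
    define D where "D = degree (q * (f * h))"
    have D: "D = degree q + degree f + degree h"
      using \<open>q \<noteq> 0\<close> assms(1,2) by (simp add: D_def degree_mult_eq)
    have "coeff (r * f) D = 0"
    proof (cases "r = 0")
      case False
      hence "degree r < degree h" using degree_mod_less[OF \<open>h \<noteq> 0\<close>, of w] by (simp add: r_def)
      hence "degree (r * f) < D" using degree_mult_le[of r f] D by linarith
      thus ?thesis by (simp add: coeff_eq_0)
    qed simp
    hence "coeff p D \<noteq> 0"
      using \<open>q \<noteq> 0\<close> assms(1,2) by (simp add: p_qr D_def)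
    moreover have "n \<le> D" using D \<open>k \<le> degree q\<close> assms(3-6) by linarith
    ultimately show False using p by blast
  qed
  define lam where "lam i = (if i < k then coeff q i else coeff r (i - k))" for i
  have "poly_of_vec k lam = q" "poly_of_vec (d - k) (\<lambda>i. lam (k + i)) = r"
    using poly_of_vec_coeff[OF q_vanish] poly_of_vec_coeff[OF r_vanish]
    by (auto simp: lam_def poly_of_vec_def intro!: sum.cong)
  hence "p = G_combination k d (f * h) f lam" by (simp add: G_combination_def p_qr)
  thus "\<exists>lam. p = G_combination k d (f * h) f lam" by blast
next
  assume "\<exists>lam. p = G_combination k d (f * h) f lam"
  thus "f dvd p" by (auto simp: G_combination_def algebra_simps)
qed

lemma G_matrix_generator:
  fixes f g :: "'a::field poly"
  assumes "f dvd g" "g \<noteq> 0" "degree g = n - k" "degree f = n - d" "k \<le> d" "d \<le> n"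
  shows "is_generator_matrix d n (G_matrix k g f) (rs_code n f)"
proof -
  obtain h where g: "g = f * h" using assms(1) by (elim dvdE)
  with assms(2) have "f \<noteq> 0" "h \<noteq> 0" by auto
  hence "degree h = d - k" using assms(3-6) by (simp add: g degree_mult_eq)
  note comb = G_matrix_row_combination[OF \<open>k \<le> d\<close>, of _ g f]
  have vanish: "\<forall>j\<ge>n. coeff (G_combination k d g f lam) j = 0" for lam
    using assms(3-6) by (auto intro: coeff_G_combination_eq_0)
  have "rows_lin_indep d n (G_matrix k g f)"
    unfolding rows_lin_indep_def
  proof (intro allI impI)
    fix lam :: "nat \<Rightarrow> 'a" and r assume "\<forall>j<n. (\<Sum>r<d. lam r * G_matrix k g f r j) = 0" "r < d"
    hence "G_combination k d g f lam = 0"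
      using vanish by (auto simp: poly_eq_iff comb not_le[symmetric])
    thus "lam r = 0"
      using G_combination_eq_0D \<open>f \<noteq> 0\<close> \<open>h \<noteq> 0\<close> \<open>degree h = d - k\<close> \<open>r < d\<close> g by blast
  qed
  moreover have "c \<in> row_space d n (G_matrix k g f) \<longleftrightarrow> c \<in> rs_code n f" for c
  proof -
    have "c \<in> row_space d n (G_matrix k g f) \<longleftrightarrow>
          (\<forall>j\<ge>n. c j = 0) \<and> (\<exists>lam. poly_of_vec n c = G_combination k d g f lam)"
      by (simp add: row_space_def comb poly_of_vec_eq_iff[OF vanish])
    also have "\<dots> \<longleftrightarrow> c \<in> rs_code n f"
      using dvd_iff_G_combination[OF \<open>f \<noteq> 0\<close> \<open>h \<noteq> 0\<close> assms(4) \<open>degree h = d - k\<close> assms(5,6),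
          of "poly_of_vec n c"]
      by (auto simp: rs_code_iff g coeff_poly_of_vec)
    finally show ?thesis .
  qed
  ultimately show ?thesis by (auto simp: is_generator_matrix_def)
qed

lemma is_generator_matrix_cong:
  assumes "\<And>r j. r < t \<Longrightarrow> j < n \<Longrightarrow> M r j = M' r j"
  shows "is_generator_matrix t n M C \<longleftrightarrow> is_generator_matrix t n M' C"
proof -
  have "(\<Sum>r<t. lam r * M r j) = (\<Sum>r<t. lam r * M' r j)" if "j < n" for lam j
    using assms that by simp
  thus ?thesis
    by (simp add: is_generator_matrix_def rows_lin_indep_def row_space_def cong: conj_cong)
qed

lemma G_matrix_generator_first_rows:
  fixes f g :: "'a::field poly"
  assumes "g \<noteq> 0" "degree g = n - k" "k \<le> n"
  shows "is_generator_matrix k n (G_matrix k g f) (rs_code n g)"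
proof -
  have "is_generator_matrix k n (G_matrix k g g) (rs_code n g)"
    using assms by (intro G_matrix_generator) auto
  thus ?thesis by (rule iffD1[OF is_generator_matrix_cong, rotated]) (simp add: G_matrix_def)
qed

lemma card_shift_row_support_le: "card {j. j < n \<and> shift_row p s j \<noteq> 0} \<le> degree p + 1"
proof -
  have "{j. j < n \<and> shift_row p s j \<noteq> 0} \<subseteq> {s..s + degree p}"
    by (auto simp: shift_row_def split: if_splits dest: le_degree)
  from card_mono[OF _ this] show ?thesis by simp
qed

lemma update_complexity_G_matrix_le:
  assumes "0 < d" "degree f \<le> degree g"
  shows "update_complexity d n (G_matrix k g f) \<le> degree g + 1"
  unfolding update_complexity_def
proof (rule Max.boundedI)
  fix w assume "w \<in> row_weight n (G_matrix k g f) ` {..<d}"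
  then obtain r where "w = row_weight n (G_matrix k g f) r" by blast
  thus "w \<le> degree g + 1"
    using card_shift_row_support_le[of n g r] card_shift_row_support_le[of n f "r - k"] assms(2)
    by (cases "r < k") (simp_all add: row_weight_def G_matrix_def)
qed (use \<open>0 < d\<close> in auto)

lemma row_weight_le_update_complexity: "r < t \<Longrightarrow> row_weight n M r \<le> update_complexity t n M"
  by (simp add: update_complexity_def)

text \<open>Each row of a generator matrix is a nonzero codeword, so the BCH bound applies to it.\<close>

lemma generator_matrix_row_weight_ge:
  fixes a :: "'a::field"
  assumes M: "is_generator_matrix t n M (rs_code n (rs_gen_poly a s))"
    and "a \<noteq> 0" "inj_on (\<lambda>i. a ^ i) {..<n}" and "r < t"
  shows "s + 1 \<le> row_weight n M r"
proof -
  define c where "c j = (if j < n then M r j else 0)" for j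
  define e :: "nat \<Rightarrow> 'a" where "e i = (if i = r then 1 else 0)" for i
  have row: "(\<Sum>i<t. e i * M i j) = M r j" for j
    using \<open>r < t\<close> by (simp add: e_def if_distrib[of "\<lambda>x. x * _"] cong: if_cong)
  have "c \<in> row_space t n M"
    unfolding row_space_def c_def by (auto intro!: exI[of _ e] simp: row)
  hence "c \<in> rs_code n (rs_gen_poly a s)" using M by (simp add: is_generator_matrix_def)
  moreover have "\<exists>j0<n. M r j0 \<noteq> 0"
  proof (rule ccontr)
    assume "\<not> (\<exists>j0<n. M r j0 \<noteq> 0)"
    hence "e r = 0"
      using M \<open>r < t\<close> by (simp add: is_generator_matrix_def rows_lin_indep_def row)
    thus False by (simp add: e_def)
  qed
  then obtain j0 where "j0 < n" "M r j0 \<noteq> 0" by blast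
  ultimately have "s + 1 \<le> card {j. j < n \<and> c j \<noteq> 0}"
    using rs_code_weight_ge[OF assms(2,3), of c s j0] by (simp add: c_def)
  also have "{j. j < n \<and> c j \<noteq> 0} = {j. j < n \<and> M r j \<noteq> 0}" by (auto simp: c_def)
  finally show ?thesis by (simp add: row_weight_def)
qed

lemma update_complexity_ge:
  fixes a :: "'a::field"
  assumes "is_generator_matrix k n M (rs_code n (rs_gen_poly a s))"
    and "a \<noteq> 0" "inj_on (\<lambda>i. a ^ i) {..<n}" and "0 < k" "k \<le> d"
  shows "s + 1 \<le> update_complexity d n M"
proof -
  have "s + 1 \<le> row_weight n M 0"
    using assms(1-4) by (rule generator_matrix_row_weight_ge)
  also have "\<dots> \<le> update_complexity d n M"
    using assms(4,5) by (intro row_weight_le_update_complexity) auto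
  finally show ?thesis .
qed

theorem corollary4:
  fixes a :: "'a::{field,finite}" and m n k d :: nat
  assumes "card (UNIV :: 'a set) = 2 ^ m"
    and "primitive_element a"
    and "n \<le> 2 ^ m - 1"
    and "1 \<le> k" and "k \<le> d" and "d \<le> n - 1"
  shows "least_update_complexity n k d (rs_gen_poly a (n - k)) (rs_gen_poly a (n - d))
           (G_matrix k (rs_gen_poly a (n - k)) (rs_gen_poly a (n - d)))"
proof -
  define g f where "g = rs_gen_poly a (n - k)" and "f = rs_gen_poly a (n - d)"
  have "2 < card (UNIV :: 'a set)" using assms(1,3-6) by linarith
  hence "a \<noteq> 0" using assms(2) by (rule primitive_element_nonzero[rotated])
  have inj: "inj_on (\<lambda>i. a ^ i) {..<n}"
    using inj_on_power_primitive_element[OF assms(2) \<open>a \<noteq> 0\<close>] assms(1,3)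
    by (auto elim!: inj_on_subset)
  have deg: "degree g = n - k" "degree f = n - d" "g \<noteq> 0"
    by (simp_all add: g_def f_def degree_rs_gen_poly rs_gen_poly_nonzero)
  have "f dvd g" using assms(5) by (simp add: f_def g_def rs_gen_poly_dvd)
  have "is_generator_matrix k n (G_matrix k g f) (rs_code n g)"
    using deg assms(5,6) by (intro G_matrix_generator_first_rows) auto
  moreover have "is_generator_matrix d n (G_matrix k g f) (rs_code n f)"
    using \<open>f dvd g\<close> deg assms(5,6) by (intro G_matrix_generator) auto
  moreover have "update_complexity d n (G_matrix k g f) \<le> n - k + 1"
    using update_complexity_G_matrix_le[of d f g n k] deg assms(4,5) by simp
  moreover have "n - k + 1 \<le> update_complexity d n M'" if "mbr_admissible n k d g f M'" for M'
    using that \<open>a \<noteq> 0\<close> inj assms(4,5)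
    by (intro update_complexity_ge[where a = a]) (auto simp: mbr_admissible_def g_def)
  ultimately show ?thesis
    unfolding least_update_complexity_def mbr_admissible_def f_def[symmetric] g_def[symmetric]
    by (meson order_trans)
qed

end
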